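(* Let $\mathcal Z,\mathcal S$ be finite, $f:\mathcal Z\times\mathcal S\to\mathbb R$, and $(Z_i,S_i)$, $i=1,\dots,n$, random variables with a common joint law $P_{ZS}$ (not depending on $i$) such that $\Pr[\mathbf S=\mathbf s\mid\mathbf Z=\mathbf z]=\prod_{i=1}^n\Pr[S_i=s_i\mid Z_i=z_i]$. Suppose there are reals $a<b$ such that for every $z$ with $P_Z(z)>0$ and every $s$ with $P_{S|Z}(s|z)>0$, $a\le f(z,s)-\mathbb E_{S\sim P_{S|Z}(\cdot|z)}[f(z,S)]\le b$. Then for every type $p$ with $\Pr[\hat p_{\mathbf Z}=p]>0$ and every $\xi>0$, $$\Pr\Big[\Big|\sum_{i=1}^n f(Z_i,S_i)-\mu\Big|\ge\xi\ \Big|\ \hat p_{\mathbf Z}=p\Big]\le 2e^{-\frac{\xi^2}{n(b-a)^2}},$$ where $\mu=\mathbb E\big[\sum_{i=1}^n f(Z_i,S_i)\mid\hat p_{\mathbf Z}=p\big]$.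
   Context: $\mathbf Z=(Z_1,\dots,Z_n)$, $\mathbf S=(S_1,\dots,S_n)$; $\hat p_{\mathbf Z}$ is the empirical distribution (type) of $\mathbf Z$; $P_{S|Z}$ is the conditional of $P_{ZS}$. *)

theory Defs
  imports "HOL-Probability.Probability"
begin

definition cond_prob :: "'a measure \<Rightarrow> 'a set \<Rightarrow> 'a set \<Rightarrow> real" where
  "cond_prob M A B = measure M (A \<inter> B) / measure M B"

definition cond_exp_event :: "'a measure \<Rightarrow> ('a \<Rightarrow> real) \<Rightarrow> 'a set \<Rightarrow> real" where
  "cond_exp_event M X B = (\<integral>\<omega>. indicator B \<omega> * X \<omega> \<partial>M) / measure M B"

definition emp_type :: "nat \<Rightarrow> (nat \<Rightarrow> 'z) \<Rightarrow> 'z \<Rightarrow> real" where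
  "emp_type n zv z = real (card {i\<in>{..<n}. zv i = z}) / real n"

end

theory Submission
  imports Defs
begin

text \<open>Condition on the whole vector \<open>Z = z\<close>. On a cell of positive probability the \<open>S\<^sub>i\<close>
  are independent, \<open>S\<^sub>i\<close> having the conditional law of \<open>S\<close> given \<open>Z = z\<^sub>i\<close>, and each summand
  \<open>f(z\<^sub>i, S\<^sub>i)\<close> ranges over an interval of length \<open>b - a\<close>; so Hoeffding's inequality bounds the
  deviation of the sum from its cellwise mean \<open>\<Sum>\<^sub>i E[f(z\<^sub>i, S) | Z = z\<^sub>i]\<close>. That mean depends
  on \<open>z\<close> only through its type, so it is one constant on all cells making up the event
  \<open>{type = p}\<close>; this constant is therefore \<open>\<mu>\<close>, and averaging the cellwise tail bounds over
  these cells gives the claim.\<close>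

section \<open>Hoeffding's inequality for product pmfs\<close>

lemma expectation_Pi_pmf_component:
  fixes h :: "'b \<Rightarrow> real"
  assumes "finite I" "i \<in> I"
  shows "measure_pmf.expectation (Pi_pmf I dflt D) (\<lambda>v. h (v i)) = measure_pmf.expectation (D i) h"
proof -
  have "measure_pmf.expectation (D i) h = measure_pmf.expectation (map_pmf (\<lambda>v. v i) (Pi_pmf I dflt D)) h"
    using assms by (simp add: Pi_pmf_component)
  then show ?thesis by simp
qed

lemma expectation_Pi_pmf_sum:
  fixes X :: "'i \<Rightarrow> 'b \<Rightarrow> real"
  assumes "finite I" "\<And>i. i \<in> I \<Longrightarrow> integrable (measure_pmf (D i)) (X i)"
  shows "measure_pmf.expectation (Pi_pmf I dflt D) (\<lambda>v. \<Sum>i\<in>I. X i (v i))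
       = (\<Sum>i\<in>I. measure_pmf.expectation (D i) (X i))"
proof -
  have "integrable (measure_pmf (Pi_pmf I dflt D)) (\<lambda>v. X i (v i))" if "i \<in> I" for i
  proof -
    have "integrable (map_pmf (\<lambda>v. v i) (Pi_pmf I dflt D)) (X i)"
      using assms that by (simp add: Pi_pmf_component)
    then show ?thesis by simp
  qed
  then show ?thesis
    using assms by (simp add: Bochner_Integration.integral_sum expectation_Pi_pmf_component)
qed

lemma Pi_pmf_Hoeffding_abs_ge:
  fixes D :: "'i \<Rightarrow> 'b pmf" and X :: "'i \<Rightarrow> 'b \<Rightarrow> real"
  assumes "finite I" "\<epsilon> \<ge> 0"
    and "\<And>i x. i \<in> I \<Longrightarrow> x \<in> set_pmf (D i) \<Longrightarrow> X i x \<in> {l i..u i}"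
  shows "measure_pmf.prob (Pi_pmf I dflt D)
           {v. \<epsilon> \<le> \<bar>(\<Sum>i\<in>I. X i (v i)) - (\<Sum>i\<in>I. measure_pmf.expectation (D i) (X i))\<bar>}
         \<le> 2 * exp (-2 * \<epsilon>\<^sup>2 / (\<Sum>i\<in>I. (u i - l i)\<^sup>2))"
proof (cases "(\<Sum>i\<in>I. (u i - l i)\<^sup>2) > 0")
  case True
  interpret Hoeffding_ineq "measure_pmf (Pi_pmf I dflt D)" I "\<lambda>i v. X i (v i)" l u
    "\<Sum>i\<in>I. measure_pmf.expectation (D i) (X i)"
  proof unfold_locales
    show "prob_space.indep_vars (measure_pmf (Pi_pmf I dflt D)) (\<lambda>_. borel) (\<lambda>i v. X i (v i)) I"
      by (rule prob_space.indep_vars_compose2[OF measure_pmf.prob_space_axioms indep_vars_Pi_pmf])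
         (use assms in auto)
    show "AE v in measure_pmf (Pi_pmf I dflt D). X i (v i) \<in> {l i..u i}" if "i \<in> I" for i
      using assms that by (intro AE_pmfI) (auto simp: set_Pi_pmf PiE_dflt_def)
    show "(\<Sum>i\<in>I. measure_pmf.expectation (D i) (X i))
        \<equiv> (\<Sum>i\<in>I. measure_pmf.expectation (Pi_pmf I dflt D) (\<lambda>v. X i (v i)))"
      using assms by (simp add: expectation_Pi_pmf_component)
  qed (fact assms)
  show ?thesis
    using Hoeffding_ineq_abs_ge[OF assms(2) True] by simp
next
  case False
  \<comment> \<open>then the denominator is 0, and since \<open>x / 0 = 0\<close> the bound is the trivial 2\<close>
  then have "(\<Sum>i\<in>I. (u i - l i)\<^sup>2) = 0"
    by (meson antisym not_less sum_nonneg zero_le_power2)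
  then show ?thesis
    using measure_pmf.prob_le_1 by (simp add: order.trans[OF _ one_le_numeral])
qed

corollary Pi_pmf_Hoeffding_abs_ge_centered:
  fixes D :: "'i \<Rightarrow> 'b pmf" and X :: "'i \<Rightarrow> 'b \<Rightarrow> real" and a b :: real
  assumes "finite I" "\<epsilon> \<ge> 0"
    and range: "\<And>i x. i \<in> I \<Longrightarrow> x \<in> set_pmf (D i) \<Longrightarrow>
      X i x - measure_pmf.expectation (D i) (X i) \<in> {a..b}"
  shows "measure_pmf.prob (Pi_pmf I dflt D)
           {v. \<epsilon> \<le> \<bar>(\<Sum>i\<in>I. X i (v i)) - (\<Sum>i\<in>I. measure_pmf.expectation (D i) (X i))\<bar>}
         \<le> 2 * exp (-2 * \<epsilon>\<^sup>2 / (card I * (b - a)\<^sup>2))"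
  using Pi_pmf_Hoeffding_abs_ge[OF assms(1,2), of D X "\<lambda>i. measure_pmf.expectation (D i) (X i) + a"
      "\<lambda>i. measure_pmf.expectation (D i) (X i) + b" dflt] range
  by (force simp: algebra_simps)

section \<open>Finitely valued random variables with a conditional law\<close>

lemma (in finite_measure) integral_comp_finite_valued:
  fixes V :: "'a \<Rightarrow> 'b" and h :: "'b \<Rightarrow> real"
  assumes "finite A" "V \<in> space M \<rightarrow> A"
    and fibre_sets: "\<And>v. v \<in> A \<Longrightarrow> {\<omega>\<in>space M. V \<omega> = v} \<in> sets M"
  shows "(\<integral>\<omega>. h (V \<omega>) \<partial>M) = (\<Sum>v\<in>A. measure M {\<omega>\<in>space M. V \<omega> = v} * h v)"
proof -
  have "h (V \<omega>) = (\<Sum>v\<in>A. indicator {\<omega>\<in>space M. V \<omega> = v} \<omega> * h v)" if "\<omega> \<in> space M" for \<omega>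
    using assms(1,2) that by (auto simp: indicator_def if_distrib sum.delta Int_insert_right cong: if_cong)
  then have "(\<integral>\<omega>. h (V \<omega>) \<partial>M) = (\<integral>\<omega>. (\<Sum>v\<in>A. indicator {\<omega>\<in>space M. V \<omega> = v} \<omega> * h v) \<partial>M)"
    by (intro Bochner_Integration.integral_cong) auto
  also have "\<dots> = (\<Sum>v\<in>A. measure M {\<omega>\<in>space M. V \<omega> = v} * h v)"
    using fibre_sets by (subst Bochner_Integration.integral_sum) (auto simp: less_top[symmetric])
  finally show ?thesis .
qed

locale discrete_conditional_law = prob_space M
  for M :: "'a measure" +
  fixes X :: "'a \<Rightarrow> 'b" and Y :: "'a \<Rightarrow> 'c" and F :: "'b set" and G :: "'c set"
    and K :: "'b \<Rightarrow> 'c pmf"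
  assumes finite_F: "finite F" and finite_G: "finite G"
    and X_in: "X \<in> space M \<rightarrow> F" and Y_in: "Y \<in> space M \<rightarrow> G"
    and X_fibre_sets: "\<And>x. x \<in> F \<Longrightarrow> {\<omega>\<in>space M. X \<omega> = x} \<in> sets M"
    and Y_fibre_sets: "\<And>y. y \<in> G \<Longrightarrow> {\<omega>\<in>space M. Y \<omega> = y} \<in> sets M"
    and set_pmf_K: "\<And>x. x \<in> F \<Longrightarrow> set_pmf (K x) \<subseteq> G"
    and joint_law: "\<And>x y. x \<in> F \<Longrightarrow> y \<in> G \<Longrightarrow> prob {\<omega>\<in>space M. X \<omega> = x} > 0 \<Longrightarrow>
      prob {\<omega>\<in>space M. X \<omega> = x \<and> Y \<omega> = y} = prob {\<omega>\<in>space M. X \<omega> = x} * pmf (K x) y"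
begin

lemma joint_fibre_sets: "{\<omega>\<in>space M. X \<omega> = x \<and> Y \<omega> = y} \<in> sets M" if "x \<in> F" "y \<in> G"
proof -
  have "{\<omega>\<in>space M. X \<omega> = x \<and> Y \<omega> = y} = {\<omega>\<in>space M. X \<omega> = x} \<inter> {\<omega>\<in>space M. Y \<omega> = y}"
    by auto
  then show ?thesis
    using X_fibre_sets Y_fibre_sets that by auto
qed

lemma sets_Collect_XY: "{\<omega>\<in>space M. P (X \<omega>) (Y \<omega>)} \<in> sets M"
proof -
  have "{\<omega>\<in>space M. P (X \<omega>) (Y \<omega>)}
      = (\<Union>(x, y)\<in>{(x, y)\<in>F \<times> G. P x y}. {\<omega>\<in>space M. X \<omega> = x \<and> Y \<omega> = y})"
    using X_in Y_in by fastforce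
  also have "\<dots> \<in> sets M"
    using finite_F finite_G joint_fibre_sets by (intro sets.finite_UN) (auto intro: finite_subset)
  finally show ?thesis .
qed

lemma prob_joint_eq:
  assumes "x \<in> F" "y \<in> G"
  shows "prob {\<omega>\<in>space M. X \<omega> = x \<and> Y \<omega> = y} = prob {\<omega>\<in>space M. X \<omega> = x} * pmf (K x) y"
proof (cases "prob {\<omega>\<in>space M. X \<omega> = x} > 0")
  case False
  then have "prob {\<omega>\<in>space M. X \<omega> = x} = 0"
    by (simp add: not_less measure_le_0_iff)
  moreover have "prob {\<omega>\<in>space M. X \<omega> = x \<and> Y \<omega> = y} \<le> prob {\<omega>\<in>space M. X \<omega> = x}"
    using X_fibre_sets[OF assms(1)] by (intro finite_measure_mono) auto
  ultimately show ?thesis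
    by (simp add: measure_le_0_iff)
qed (use assms joint_law in auto)

lemma integral_eq_sum_cond_law:
  "(\<integral>\<omega>. H (X \<omega>) (Y \<omega>) \<partial>M)
     = (\<Sum>x\<in>F. prob {\<omega>\<in>space M. X \<omega> = x} * measure_pmf.expectation (K x) (H x))"
proof -
  have expectation_K: "measure_pmf.expectation (K x) (H x) = (\<Sum>y\<in>G. H x y * pmf (K x) y)" if "x \<in> F" for x
    using finite_G set_pmf_K[OF that] by (intro integral_measure_pmf_real) auto
  have "(\<integral>\<omega>. H (X \<omega>) (Y \<omega>) \<partial>M) = (\<integral>\<omega>. case_prod H (X \<omega>, Y \<omega>) \<partial>M)"
    by simp
  also have "\<dots> = (\<Sum>z\<in>F \<times> G. prob {\<omega>\<in>space M. (X \<omega>, Y \<omega>) = z} * case_prod H z)"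
    using finite_F finite_G X_in Y_in joint_fibre_sets
    by (intro integral_comp_finite_valued) auto
  also have "\<dots> = (\<Sum>x\<in>F. \<Sum>y\<in>G. prob {\<omega>\<in>space M. X \<omega> = x \<and> Y \<omega> = y} * H x y)"
    unfolding sum.cartesian_product by (intro sum.cong) auto
  also have "\<dots> = (\<Sum>x\<in>F. prob {\<omega>\<in>space M. X \<omega> = x} * measure_pmf.expectation (K x) (H x))"
    by (simp add: prob_joint_eq expectation_K sum_distrib_right mult_ac)
  finally show ?thesis .
qed

lemma prob_eq_sum_cond_law:
  "prob {\<omega>\<in>space M. P (X \<omega>) (Y \<omega>)}
     = (\<Sum>x\<in>F. prob {\<omega>\<in>space M. X \<omega> = x} * measure_pmf.prob (K x) {y. P x y})"
proof -
  have "prob {\<omega>\<in>space M. P (X \<omega>) (Y \<omega>)} = (\<integral>\<omega>. indicator {\<omega>\<in>space M. P (X \<omega>) (Y \<omega>)} \<omega> \<partial>M)"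
    using sets_Collect_XY[of P] by simp
  also have "\<dots> = (\<integral>\<omega>. indicator {y. P (X \<omega>) y} (Y \<omega>) \<partial>M)"
    by (intro Bochner_Integration.integral_cong) (auto simp: indicator_def)
  also have "\<dots> = (\<Sum>x\<in>F. prob {\<omega>\<in>space M. X \<omega> = x} * measure_pmf.prob (K x) {y. P x y})"
    by (simp add: integral_eq_sum_cond_law[where H="\<lambda>x. indicator {y. P x y}"])
  finally show ?thesis .
qed

lemma prob_X_in_eq_sum:
  "prob {\<omega>\<in>space M. X \<omega> \<in> C} = (\<Sum>x\<in>F. prob {\<omega>\<in>space M. X \<omega> = x} * indicator C x)"
proof -
  have "measure_pmf.prob (K x) {y. x \<in> C} = indicator C x" for x
    by (cases "x \<in> C") auto
  then show ?thesis
    using prob_eq_sum_cond_law[where P="\<lambda>x y. x \<in> C"] by simp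
qed

lemma cond_exp_event_eq_if_cells:
  assumes "prob {\<omega>\<in>space M. X \<omega> \<in> C} > 0"
    and "\<And>x. x \<in> F \<Longrightarrow> x \<in> C \<Longrightarrow> prob {\<omega>\<in>space M. X \<omega> = x} > 0 \<Longrightarrow>
      measure_pmf.expectation (K x) (h x) = c"
  shows "cond_exp_event M (\<lambda>\<omega>. h (X \<omega>) (Y \<omega>)) {\<omega>\<in>space M. X \<omega> \<in> C} = c"
proof -
  have "(\<integral>\<omega>. indicator {\<omega>\<in>space M. X \<omega> \<in> C} \<omega> * h (X \<omega>) (Y \<omega>) \<partial>M)
      = (\<integral>\<omega>. indicator C (X \<omega>) * h (X \<omega>) (Y \<omega>) \<partial>M)"
    by (intro Bochner_Integration.integral_cong) (auto simp: indicator_def)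
  also have "\<dots> = (\<Sum>x\<in>F. prob {\<omega>\<in>space M. X \<omega> = x} * (indicator C x * measure_pmf.expectation (K x) (h x)))"
    by (simp add: integral_eq_sum_cond_law[where H="\<lambda>x y. indicator C x * h x y"])
  also have "\<dots> = (\<Sum>x\<in>F. prob {\<omega>\<in>space M. X \<omega> = x} * indicator C x * c)"
  proof (intro sum.cong refl)
    fix x assume "x \<in> F"
    have "prob {\<omega>\<in>space M. X \<omega> = x} = 0 \<or> prob {\<omega>\<in>space M. X \<omega> = x} > 0"
      using measure_nonneg[of M "{\<omega>\<in>space M. X \<omega> = x}"] by linarith
    with \<open>x \<in> F\<close> show "prob {\<omega>\<in>space M. X \<omega> = x} * (indicator C x * measure_pmf.expectation (K x) (h x))
        = prob {\<omega>\<in>space M. X \<omega> = x} * indicator C x * c"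
      using assms(2) by (auto simp: indicator_def)
  qed
  also have "\<dots> = c * prob {\<omega>\<in>space M. X \<omega> \<in> C}"
    by (simp add: prob_X_in_eq_sum sum_distrib_left sum_distrib_right mult_ac)
  finally show ?thesis
    using assms(1) by (simp add: cond_exp_event_def)
qed

lemma cond_prob_le_if_cells:
  assumes "prob {\<omega>\<in>space M. X \<omega> \<in> C} > 0"
    and "\<And>x. x \<in> F \<Longrightarrow> x \<in> C \<Longrightarrow> prob {\<omega>\<in>space M. X \<omega> = x} > 0 \<Longrightarrow>
      measure_pmf.prob (K x) {y. R x y} \<le> \<beta>"
  shows "cond_prob M {\<omega>\<in>space M. R (X \<omega>) (Y \<omega>)} {\<omega>\<in>space M. X \<omega> \<in> C} \<le> \<beta>"
proof -
  have "prob ({\<omega>\<in>space M. R (X \<omega>) (Y \<omega>)} \<inter> {\<omega>\<in>space M. X \<omega> \<in> C})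
      = prob {\<omega>\<in>space M. X \<omega> \<in> C \<and> R (X \<omega>) (Y \<omega>)}"
    by (intro arg_cong[where f=prob]) auto
  also have "\<dots> = (\<Sum>x\<in>F. prob {\<omega>\<in>space M. X \<omega> = x} * measure_pmf.prob (K x) {y. x \<in> C \<and> R x y})"
    by (rule prob_eq_sum_cond_law)
  also have "\<dots> \<le> (\<Sum>x\<in>F. prob {\<omega>\<in>space M. X \<omega> = x} * indicator C x * \<beta>)"
  proof (intro sum_mono)
    fix x assume "x \<in> F"
    have "prob {\<omega>\<in>space M. X \<omega> = x} = 0 \<or> prob {\<omega>\<in>space M. X \<omega> = x} > 0"
      using measure_nonneg[of M "{\<omega>\<in>space M. X \<omega> = x}"] by linarith
    with \<open>x \<in> F\<close> show "prob {\<omega>\<in>space M. X \<omega> = x} * measure_pmf.prob (K x) {y. x \<in> C \<and> R x y}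
        \<le> prob {\<omega>\<in>space M. X \<omega> = x} * indicator C x * \<beta>"
      using assms(2) by (auto simp: indicator_def intro: mult_left_mono)
  qed
  also have "\<dots> = \<beta> * prob {\<omega>\<in>space M. X \<omega> \<in> C}"
    by (simp add: prob_X_in_eq_sum sum_distrib_left sum_distrib_right mult_ac)
  finally show ?thesis
    using assms(1) by (simp add: cond_prob_def divide_le_eq)
qed

end

section \<open>Conditionally independent samples\<close>

text \<open>Only meaningful if \<open>P z\<close> is nonnegative with positive total mass; otherwise
  \<open>embed_pmf\<close> returns an unspecified pmf.\<close>

definition cond_pmf :: "('z \<Rightarrow> 's::finite \<Rightarrow> real) \<Rightarrow> 'z \<Rightarrow> 's pmf" where
  "cond_pmf P z = embed_pmf (\<lambda>s. P z s / (\<Sum>t\<in>UNIV. P z t))"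

lemma pmf_cond_pmf:
  assumes "\<And>s. 0 \<le> P z s" "0 < (\<Sum>t\<in>UNIV. P z t)"
  shows "pmf (cond_pmf P z) s = P z s / (\<Sum>t\<in>UNIV. P z t)"
  unfolding cond_pmf_def
proof (rule pmf_embed_pmf)
  show nonneg: "0 \<le> P z s / (\<Sum>t\<in>UNIV. P z t)" for s
    using assms by simp
  have "(\<Sum>s\<in>UNIV. P z s / (\<Sum>t\<in>UNIV. P z t)) = 1"
    using assms(2) by (simp flip: sum_divide_distrib)
  then show "(\<integral>\<^sup>+s. ennreal (P z s / (\<Sum>t\<in>UNIV. P z t)) \<partial>count_space UNIV) = 1"
    using nonneg by (simp add: nn_integral_count_space_finite)
qed

lemma set_pmf_cond_pmf:
  assumes "\<And>s. 0 \<le> P z s" "0 < (\<Sum>t\<in>UNIV. P z t)"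
  shows "set_pmf (cond_pmf P z) = {s. P z s / (\<Sum>t\<in>UNIV. P z t) > 0}"
  using assms by (auto simp: set_pmf_eq pmf_cond_pmf order.strict_iff_order)

lemma expectation_cond_pmf:
  assumes "\<And>s. 0 \<le> P z s" "0 < (\<Sum>t\<in>UNIV. P z t)"
  shows "measure_pmf.expectation (cond_pmf P z) h = (\<Sum>s\<in>UNIV. P z s / (\<Sum>t\<in>UNIV. P z t) * h s)"
  using assms by (subst integral_measure_pmf_real[of UNIV]) (auto simp: pmf_cond_pmf mult_ac)

lemma sum_eq_emp_type:
  fixes zv :: "nat \<Rightarrow> 'z::finite"
  shows "(\<Sum>i<n. g (zv i)) = (\<Sum>z\<in>UNIV. real n * emp_type n zv z * g z)"
proof -
  have "(\<Sum>i<n. g (zv i)) = (\<Sum>i<n. \<Sum>z\<in>UNIV. if zv i = z then g z else 0)"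
    by simp
  also have "\<dots> = (\<Sum>z\<in>UNIV. real (card {i\<in>{..<n}. zv i = z}) * g z)"
    by (subst sum.swap) (simp add: sum.If_cases Int_def conj_commute)
  also have "\<dots> = (\<Sum>z\<in>UNIV. real n * emp_type n zv z * g z)"
    by (cases "n = 0") (simp_all add: emp_type_def)
  finally show ?thesis .
qed

lemma emp_type_cong: "(\<And>i. i < n \<Longrightarrow> zv i = zv' i) \<Longrightarrow> emp_type n zv = emp_type n zv'"
  unfolding emp_type_def by (simp cong: conj_cong)

locale cond_indep_sample = prob_space M
  for M :: "'a measure" +
  fixes n :: nat and Z :: "nat \<Rightarrow> 'a \<Rightarrow> 'z::finite" and S :: "nat \<Rightarrow> 'a \<Rightarrow> 's::finite"
    and PZS :: "'z \<Rightarrow> 's \<Rightarrow> real"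
  assumes Z_measurable: "\<forall>i<n. Z i \<in> measurable M (count_space UNIV)"
    and S_measurable: "\<forall>i<n. S i \<in> measurable M (count_space UNIV)"
    and pair_law: "\<forall>i<n. \<forall>z s. measure M {\<omega>\<in>space M. Z i \<omega> = z \<and> S i \<omega> = s} = PZS z s"
    and cond_indep: "\<forall>zv sv. measure M {\<omega>\<in>space M. \<forall>i<n. Z i \<omega> = zv i} > 0 \<longrightarrow>
        cond_prob M {\<omega>\<in>space M. \<forall>i<n. S i \<omega> = sv i} {\<omega>\<in>space M. \<forall>i<n. Z i \<omega> = zv i}
        = (\<Prod>i<n. cond_prob M {\<omega>\<in>space M. S i \<omega> = sv i} {\<omega>\<in>space M. Z i \<omega> = zv i})"
begin

definition Zvec :: "'a \<Rightarrow> nat \<Rightarrow> 'z" where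
  "Zvec \<omega> = restrict (\<lambda>i. Z i \<omega>) {..<n}"

definition Svec :: "'a \<Rightarrow> nat \<Rightarrow> 's" where
  "Svec \<omega> = restrict (\<lambda>i. S i \<omega>) {..<n}"

text \<open>The default value \<open>undefined\<close> outside \<open>{..<n}\<close> is the one used by \<open>restrict\<close>,
  so \<open>cond_law zv\<close> is supported on \<open>PiE {..<n} (\<lambda>_. UNIV)\<close>, the range of \<open>Svec\<close>.\<close>

definition cond_law :: "(nat \<Rightarrow> 'z) \<Rightarrow> (nat \<Rightarrow> 's) pmf" where
  "cond_law zv = Pi_pmf {..<n} undefined (\<lambda>i. cond_pmf PZS (zv i))"

lemma Z_fibre_sets: "i < n \<Longrightarrow> {\<omega>\<in>space M. Z i \<omega> = z} \<in> sets M"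
  using Z_measurable by (auto intro: measurable_sets_Collect)

lemma S_fibre_sets: "i < n \<Longrightarrow> {\<omega>\<in>space M. S i \<omega> = s} \<in> sets M"
  using S_measurable by (auto intro: measurable_sets_Collect)

lemma PZS_nonneg: "i < n \<Longrightarrow> 0 \<le> PZS z s"
  using pair_law by (metis measure_nonneg)

lemma prob_Z_eq:
  assumes "i < n"
  shows "prob {\<omega>\<in>space M. Z i \<omega> = z} = (\<Sum>s\<in>UNIV. PZS z s)"
proof -
  have "prob {\<omega>\<in>space M. Z i \<omega> = z}
      = (\<Sum>s\<in>UNIV. prob ({\<omega>\<in>space M. Z i \<omega> = z} \<inter> {\<omega>\<in>space M. S i \<omega> = s}))"
    using assms Z_fibre_sets S_fibre_sets by (intro measure_real_sum_image_fn) auto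
  also have "\<dots> = (\<Sum>s\<in>UNIV. PZS z s)"
    using assms pair_law by (intro sum.cong) (auto simp: Collect_conj_eq[symmetric] conj_ac)
  finally show ?thesis .
qed

lemma cond_prob_S_Z:
  assumes "i < n"
  shows "cond_prob M {\<omega>\<in>space M. S i \<omega> = s} {\<omega>\<in>space M. Z i \<omega> = z} = PZS z s / (\<Sum>t\<in>UNIV. PZS z t)"
proof -
  have "{\<omega>\<in>space M. S i \<omega> = s} \<inter> {\<omega>\<in>space M. Z i \<omega> = z} = {\<omega>\<in>space M. Z i \<omega> = z \<and> S i \<omega> = s}"
    by auto
  then show ?thesis
    using assms pair_law prob_Z_eq by (simp add: cond_prob_def)
qed

lemma Zvec_eq_iff: "zv \<in> PiE {..<n} (\<lambda>_. UNIV) \<Longrightarrow> Zvec \<omega> = zv \<longleftrightarrow> (\<forall>i<n. Z i \<omega> = zv i)"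
  unfolding Zvec_def by (auto simp: PiE_def extensional_def fun_eq_iff)

lemma Svec_eq_iff: "sv \<in> PiE {..<n} (\<lambda>_. UNIV) \<Longrightarrow> Svec \<omega> = sv \<longleftrightarrow> (\<forall>i<n. S i \<omega> = sv i)"
  unfolding Svec_def by (auto simp: PiE_def extensional_def fun_eq_iff)

lemma Zvec_fibre_sets:
  assumes "zv \<in> PiE {..<n} (\<lambda>_. UNIV)"
  shows "{\<omega>\<in>space M. Zvec \<omega> = zv} \<in> sets M"
proof -
  have "{\<omega>\<in>space M. Zvec \<omega> = zv} = {\<omega>\<in>space M. \<forall>i\<in>{..<n}. Z i \<omega> = zv i}"
    using assms by (auto simp: Zvec_eq_iff)
  also have "\<dots> \<in> sets M"
    using Z_fibre_sets by (intro sets.sets_Collect_finite_All) auto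
  finally show ?thesis .
qed

lemma Svec_fibre_sets:
  assumes "sv \<in> PiE {..<n} (\<lambda>_. UNIV)"
  shows "{\<omega>\<in>space M. Svec \<omega> = sv} \<in> sets M"
proof -
  have "{\<omega>\<in>space M. Svec \<omega> = sv} = {\<omega>\<in>space M. \<forall>i\<in>{..<n}. S i \<omega> = sv i}"
    using assms by (auto simp: Svec_eq_iff)
  also have "\<dots> \<in> sets M"
    using S_fibre_sets by (intro sets.sets_Collect_finite_All) auto
  finally show ?thesis .
qed

lemma marginal_pos_if_cell_pos:
  assumes "prob {\<omega>\<in>space M. Zvec \<omega> = zv} > 0" "i < n"
  shows "(\<Sum>s\<in>UNIV. PZS (zv i) s) > 0"
proof -
  have "prob {\<omega>\<in>space M. Zvec \<omega> = zv} \<le> prob {\<omega>\<in>space M. Z i \<omega> = zv i}"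
    using assms(2) Z_fibre_sets by (intro finite_measure_mono) (auto simp: Zvec_def)
  then show ?thesis
    using assms prob_Z_eq by simp
qed

lemma pmf_cond_law:
  assumes "prob {\<omega>\<in>space M. Zvec \<omega> = zv} > 0" "sv \<in> PiE {..<n} (\<lambda>_. UNIV)"
  shows "pmf (cond_law zv) sv = (\<Prod>i<n. PZS (zv i) (sv i) / (\<Sum>t\<in>UNIV. PZS (zv i) t))"
  unfolding cond_law_def using assms
  by (subst pmf_Pi') (auto simp: PiE_def extensional_def pmf_cond_pmf PZS_nonneg marginal_pos_if_cell_pos)

lemma expectation_cond_law_sum:
  fixes f :: "'z \<Rightarrow> 's \<Rightarrow> real"
  shows "measure_pmf.expectation (cond_law zv) (\<lambda>sv. \<Sum>i<n. f (zv i) (sv i))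
     = (\<Sum>i<n. measure_pmf.expectation (cond_pmf PZS (zv i)) (f (zv i)))"
  unfolding cond_law_def by (rule expectation_Pi_pmf_sum) (auto intro: integrable_measure_pmf_finite)

sublocale discrete_conditional_law M Zvec Svec "PiE {..<n} (\<lambda>_. UNIV)" "PiE {..<n} (\<lambda>_. UNIV)" cond_law
proof unfold_locales
  fix zv :: "nat \<Rightarrow> 'z" and sv :: "nat \<Rightarrow> 's"
  assume zv: "zv \<in> PiE {..<n} (\<lambda>_. UNIV)" and sv: "sv \<in> PiE {..<n} (\<lambda>_. UNIV)"
    and pos: "prob {\<omega>\<in>space M. Zvec \<omega> = zv} > 0"
  define A where "A = {\<omega>\<in>space M. \<forall>i<n. Z i \<omega> = zv i}"
  define B where "B = {\<omega>\<in>space M. \<forall>i<n. S i \<omega> = sv i}"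
  have A: "{\<omega>\<in>space M. Zvec \<omega> = zv} = A"
    using zv by (auto simp: A_def Zvec_eq_iff)
  have "prob {\<omega>\<in>space M. Zvec \<omega> = zv \<and> Svec \<omega> = sv} = prob (B \<inter> A)"
    using zv sv by (intro arg_cong[where f=prob]) (auto simp: A_def B_def Zvec_eq_iff Svec_eq_iff)
  also have "\<dots> = prob A * cond_prob M B A"
    using pos by (simp add: A cond_prob_def)
  also have "cond_prob M B A = (\<Prod>i<n. cond_prob M {\<omega>\<in>space M. S i \<omega> = sv i} {\<omega>\<in>space M. Z i \<omega> = zv i})"
    using cond_indep pos unfolding A A_def B_def by blast
  also have "\<dots> = (\<Prod>i<n. PZS (zv i) (sv i) / (\<Sum>t\<in>UNIV. PZS (zv i) t))"
    by (intro prod.cong refl) (simp add: cond_prob_S_Z)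
  also have "\<dots> = pmf (cond_law zv) sv"
    using pmf_cond_law[OF pos sv] ..
  finally show "prob {\<omega>\<in>space M. Zvec \<omega> = zv \<and> Svec \<omega> = sv}
      = prob {\<omega>\<in>space M. Zvec \<omega> = zv} * pmf (cond_law zv) sv"
    by (simp add: A)
next
  show "finite (PiE {..<n} (\<lambda>_. UNIV :: 'z set))" "finite (PiE {..<n} (\<lambda>_. UNIV :: 's set))"
    by (simp_all add: finite_PiE)
  show "Zvec \<in> space M \<rightarrow> PiE {..<n} (\<lambda>_. UNIV)" "Svec \<in> space M \<rightarrow> PiE {..<n} (\<lambda>_. UNIV)"
    by (auto simp: Zvec_def Svec_def)
  show "set_pmf (cond_law zv) \<subseteq> PiE {..<n} (\<lambda>_. UNIV)" for zv
    by (auto simp: cond_law_def set_Pi_pmf PiE_dflt_def PiE_def extensional_def)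
qed (simp_all add: Zvec_fibre_sets Svec_fibre_sets)

end

theorem lemma17:
  fixes M :: "'a measure"
    and Z :: "nat \<Rightarrow> 'a \<Rightarrow> 'z::finite"
    and S :: "nat \<Rightarrow> 'a \<Rightarrow> 's::finite"
    and f :: "'z \<Rightarrow> 's \<Rightarrow> real"
    and PZS :: "'z \<Rightarrow> 's \<Rightarrow> real"
    and n :: nat and a b \<xi> :: real and p :: "'z \<Rightarrow> real"
  assumes M: "prob_space M"
    and Zmeas: "\<forall>i<n. Z i \<in> measurable M (count_space UNIV)"
    and Smeas: "\<forall>i<n. S i \<in> measurable M (count_space UNIV)"
    and law: "\<forall>i<n. \<forall>z s. measure M {\<omega>\<in>space M. Z i \<omega> = z \<and> S i \<omega> = s} = PZS z s"
    and condind: "\<forall>zv sv. measure M {\<omega>\<in>space M. \<forall>i<n. Z i \<omega> = zv i} > 0 \<longrightarrow>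
        cond_prob M {\<omega>\<in>space M. \<forall>i<n. S i \<omega> = sv i} {\<omega>\<in>space M. \<forall>i<n. Z i \<omega> = zv i}
        = (\<Prod>i<n. cond_prob M {\<omega>\<in>space M. S i \<omega> = sv i} {\<omega>\<in>space M. Z i \<omega> = zv i})"
    and ab: "a < b"
    and bnd: "\<forall>z s. (\<Sum>s'\<in>UNIV. PZS z s') > 0 \<and> PZS z s / (\<Sum>s'\<in>UNIV. PZS z s') > 0 \<longrightarrow>
        a \<le> f z s - (\<Sum>s'\<in>UNIV. (PZS z s' / (\<Sum>t\<in>UNIV. PZS z t)) * f z s') \<and>
        f z s - (\<Sum>s'\<in>UNIV. (PZS z s' / (\<Sum>t\<in>UNIV. PZS z t)) * f z s') \<le> b"
    and ptype: "measure M {\<omega>\<in>space M. emp_type n (\<lambda>i. Z i \<omega>) = p} > 0"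
    and xi: "\<xi> > 0"
  shows "let E = {\<omega>\<in>space M. emp_type n (\<lambda>i. Z i \<omega>) = p};
             T = (\<lambda>\<omega>. \<Sum>i<n. f (Z i \<omega>) (S i \<omega>));
             \<mu> = cond_exp_event M T E
         in cond_prob M {\<omega>\<in>space M. \<bar>T \<omega> - \<mu>\<bar> \<ge> \<xi>} E
            \<le> 2 * exp (- (\<xi>\<^sup>2) / (real n * (b - a)\<^sup>2))"
proof -
  interpret cond_indep_sample M n Z S PZS
    using M Zmeas Smeas law condind by (intro cond_indep_sample.intro cond_indep_sample_axioms.intro)
  define g where "g z = measure_pmf.expectation (cond_pmf PZS z) (f z)" for z
  define h where "h zv sv = (\<Sum>i<n. f (zv i) (sv i))" for zv :: "nat \<Rightarrow> 'z" and sv :: "nat \<Rightarrow> 's"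
  define c where "c = (\<Sum>z\<in>UNIV. real n * p z * g z)"
  define C where "C = {zv. emp_type n zv = p}"
  have "emp_type n (Zvec \<omega>) = emp_type n (\<lambda>i. Z i \<omega>)" for \<omega>
    by (rule emp_type_cong) (simp add: Zvec_def)
  then have E: "{\<omega>\<in>space M. emp_type n (\<lambda>i. Z i \<omega>) = p} = {\<omega>\<in>space M. Zvec \<omega> \<in> C}"
    by (auto simp: C_def)
  have T: "(\<lambda>\<omega>. \<Sum>i<n. f (Z i \<omega>) (S i \<omega>)) = (\<lambda>\<omega>. h (Zvec \<omega>) (Svec \<omega>))"
    by (auto simp: h_def Zvec_def Svec_def intro!: sum.cong)
  have cell_sum: "(\<Sum>i<n. g (zv i)) = c" if "zv \<in> C" for zv
    using that sum_eq_emp_type[where g=g and zv=zv] by (simp add: C_def c_def)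
  have cell_mean: "measure_pmf.expectation (cond_law zv) (h zv) = c" if "zv \<in> C" for zv
    using cell_sum[OF that] by (simp add: h_def[abs_def] g_def expectation_cond_law_sum)
  have centred: "f (zv i) s - g (zv i) \<in> {a..b}"
    if "prob {\<omega>\<in>space M. Zvec \<omega> = zv} > 0" "i \<in> {..<n}" "s \<in> set_pmf (cond_pmf PZS (zv i))" for zv i s
  proof -
    have "\<And>s. 0 \<le> PZS (zv i) s" "0 < (\<Sum>t\<in>UNIV. PZS (zv i) t)"
      using that PZS_nonneg marginal_pos_if_cell_pos by auto
    then show ?thesis
      using that(3) bnd by (auto simp: g_def set_pmf_cond_pmf expectation_cond_pmf)
  qed
  have cell_tail: "measure_pmf.prob (cond_law zv) {sv. \<xi> \<le> \<bar>h zv sv - c\<bar>}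
      \<le> 2 * exp (- (\<xi>\<^sup>2) / (real n * (b - a)\<^sup>2))"
    if "zv \<in> C" "prob {\<omega>\<in>space M. Zvec \<omega> = zv} > 0" for zv
  proof -
    have "measure_pmf.prob (cond_law zv) {sv. \<xi> \<le> \<bar>h zv sv - c\<bar>}
        \<le> 2 * exp (-2 * \<xi>\<^sup>2 / (real n * (b - a)\<^sup>2))"
      using Pi_pmf_Hoeffding_abs_ge_centered[of "{..<n}" \<xi> "\<lambda>i. cond_pmf PZS (zv i)" "\<lambda>i. f (zv i)"]
        centred[OF that(2)] cell_sum[OF that(1)] xi
      by (simp add: cond_law_def h_def g_def)
    also have "\<dots> \<le> 2 * exp (- (\<xi>\<^sup>2) / (real n * (b - a)\<^sup>2))"
      \<comment> \<open>Hoeffding gives the exponent with an extra factor 2\<close>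
      by (simp add: divide_right_mono)
    finally show ?thesis .
  qed
  have mu: "cond_exp_event M (\<lambda>\<omega>. h (Zvec \<omega>) (Svec \<omega>)) {\<omega>\<in>space M. Zvec \<omega> \<in> C} = c"
    using ptype E cell_mean by (intro cond_exp_event_eq_if_cells) auto
  have "cond_prob M {\<omega>\<in>space M. \<xi> \<le> \<bar>h (Zvec \<omega>) (Svec \<omega>) - c\<bar>} {\<omega>\<in>space M. Zvec \<omega> \<in> C}
      \<le> 2 * exp (- (\<xi>\<^sup>2) / (real n * (b - a)\<^sup>2))"
    using ptype E cell_tail by (intro cond_prob_le_if_cells[where R="\<lambda>zv sv. \<xi> \<le> \<bar>h zv sv - c\<bar>"]) auto
  then show ?thesis
    unfolding Let_def E T mu .
qed

end
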